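(* Let $(X,d)$ be a compact metric space and $F:X\to 2^X$ a continuous set-valued map. Then the projection $\pi_0:\mathrm{Orb}_r(X)\to X$, $\pi_0((x_n))=x_0$, is an open map (with $\mathrm{Orb}_r(X)$ carrying the subspace topology of the product topology).
   Context: $2^X$ is the family of nonempty compact subsets of $X$. A set-valued map $F:X\to 2^X$ is upper semicontinuous if for every $x$ and open $U\supset F(x)$ there is a neighborhood $V$ of $x$ with $F(y)\subset U$ for $y\in V$; lower semicontinuous if for every $x$ and open $U$ with $F(x)\cap U\ne\emptyset$ there is a neighborhood $V$ of $x$ with $F(y)\cap U\neq\emptyset$ for $y\in V$; continuous if both. $\mathrm{Orb}_r(X)=\{(x_0,x_1,\dots)\in X^{\mathbb N}: x_{n+1}\in F(x_n)\ \forall n\}$. *)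

theory Defs
  imports "HOL-Analysis.Analysis"
begin

definition setvalued_map :: "'a::metric_space set \<Rightarrow> ('a \<Rightarrow> 'a set) \<Rightarrow> bool" where
  "setvalued_map X F \<longleftrightarrow> (\<forall>x\<in>X. F x \<noteq> {} \<and> compact (F x) \<and> F x \<subseteq> X)"

definition usc_on :: "'a::topological_space set \<Rightarrow> ('a \<Rightarrow> 'a set) \<Rightarrow> bool" where
  "usc_on X F \<longleftrightarrow> (\<forall>x\<in>X. \<forall>U. openin (top_of_set X) U \<and> F x \<subseteq> U \<longrightarrow>
      (\<exists>V. openin (top_of_set X) V \<and> x \<in> V \<and> (\<forall>y\<in>V. F y \<subseteq> U)))"

definition lsc_on :: "'a::topological_space set \<Rightarrow> ('a \<Rightarrow> 'a set) \<Rightarrow> bool" where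
  "lsc_on X F \<longleftrightarrow> (\<forall>x\<in>X. \<forall>U. openin (top_of_set X) U \<and> F x \<inter> U \<noteq> {} \<longrightarrow>
      (\<exists>V. openin (top_of_set X) V \<and> x \<in> V \<and> (\<forall>y\<in>V. F y \<inter> U \<noteq> {})))"

definition continuous_setvalued_on :: "'a::topological_space set \<Rightarrow> ('a \<Rightarrow> 'a set) \<Rightarrow> bool" where
  "continuous_setvalued_on X F \<longleftrightarrow> usc_on X F \<and> lsc_on X F"

definition Orb :: "'a set \<Rightarrow> ('a \<Rightarrow> 'a set) \<Rightarrow> (nat \<Rightarrow> 'a) set" where
  "Orb X F = {x. (\<forall>n. x n \<in> X) \<and> (\<forall>n. x (Suc n) \<in> F (x n))}"

end

theory Submission
  imports Defs
begin

text \<open>Given an orbit x through a basic open cylinder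
  \<open>U 0 \<times> \<dots> \<times> U N \<times> X \<times> \<dots>\<close>, induction on N backwards along the orbit produces a neighbourhood
  of \<open>x 0\<close> each of whose points starts an orbit meeting \<open>U 0, \<dots>, U N\<close>: the points of \<open>F y\<close>
  that start such orbits for the shifted cylinder form a set containing a neighbourhood of
  \<open>x 1\<close>, and lower semicontinuity keeps \<open>F y\<close> meeting it for y near \<open>x 0\<close>. Beyond N the orbit
  is continued arbitrarily, which is possible since F has nonempty values in X.\<close>

lemma Orb_shift:
  assumes "x \<in> Orb X F"
  shows "(\<lambda>n. x (Suc n)) \<in> Orb X F"
  using assms by (simp add: Orb_def)

lemma Orb_case_nat:
  assumes "y \<in> X" "z \<in> Orb X F" "z 0 \<in> F y"
  shows "case_nat y z \<in> Orb X F"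
  using assms unfolding Orb_def by (auto split: nat.split)

lemma Orb_through:
  assumes F_values: "\<And>x. x \<in> X \<Longrightarrow> F x \<noteq> {} \<and> F x \<subseteq> X" and "y \<in> X"
  shows "\<exists>z\<in>Orb X F. z 0 = y"
proof -
  define z where "z = rec_nat y (\<lambda>_ p. SOME q. q \<in> F p)"
  have z_Suc: "z (Suc n) = (SOME q. q \<in> F (z n))" for n
    by (simp add: z_def)
  have z_in_X: "z n \<in> X" for n
  proof (induction n)
    case 0
    then show ?case using \<open>y \<in> X\<close> by (simp add: z_def)
  next
    case (Suc n)
    then show ?case unfolding z_Suc by (metis F_values ex_in_conv someI_ex subsetD)
  qed
  have "z (Suc n) \<in> F (z n)" for n
    unfolding z_Suc by (metis F_values z_in_X ex_in_conv someI_ex)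
  with z_in_X have "z \<in> Orb X F"
    by (simp add: Orb_def)
  moreover have "z 0 = y"
    by (simp add: z_def)
  ultimately show ?thesis by blast
qed

lemma lsc_Orb_prefix_nhood:
  assumes F_values: "\<And>x. x \<in> X \<Longrightarrow> F x \<noteq> {} \<and> F x \<subseteq> X" and lsc: "lsc_on X F"
    and "x \<in> Orb X F" and "\<forall>i\<le>N. openin (top_of_set X) (U i) \<and> x i \<in> U i"
  shows "\<exists>V. openin (top_of_set X) V \<and> x 0 \<in> V \<and>
           (\<forall>y\<in>V. \<exists>z\<in>Orb X F. z 0 = y \<and> (\<forall>i\<le>N. z i \<in> U i))"
  using assms(3,4)
proof (induction N arbitrary: x U)
  case 0
  have "\<exists>z\<in>Orb X F. z 0 = y \<and> (\<forall>i\<le>0. z i \<in> U i)" if "y \<in> U 0" for y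
  proof -
    have "y \<in> X" using that 0 openin_imp_subset by blast
    then obtain z where "z \<in> Orb X F" "z 0 = y"
      using Orb_through[of X F y] F_values by blast
    then show ?thesis using that by auto
  qed
  then show ?case using 0 by blast
next
  case (Suc N)
  have "\<forall>i\<le>N. openin (top_of_set X) (U (Suc i)) \<and> x (Suc i) \<in> U (Suc i)"
    using Suc.prems(2) by auto
  from Suc.IH[OF Orb_shift[OF Suc.prems(1)] this] obtain V1 where
    V1: "openin (top_of_set X) V1" "x 1 \<in> V1"
      "\<forall>w\<in>V1. \<exists>z\<in>Orb X F. z 0 = w \<and> (\<forall>i\<le>N. z i \<in> U (Suc i))"
    by auto
  have x0: "x 0 \<in> X" and "x 1 \<in> F (x 0)"
    using Suc.prems(1) by (auto simp: Orb_def)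
  then have "F (x 0) \<inter> V1 \<noteq> {}"
    using V1(2) by blast
  then obtain V0 where
    V0: "openin (top_of_set X) V0" "x 0 \<in> V0" "\<forall>y\<in>V0. F y \<inter> V1 \<noteq> {}"
    using lsc x0 V1(1) unfolding lsc_on_def by blast
  have U0: "openin (top_of_set X) (U 0)" "x 0 \<in> U 0"
    using Suc.prems(2) by auto
  have "\<exists>z\<in>Orb X F. z 0 = y \<and> (\<forall>i\<le>Suc N. z i \<in> U i)" if y: "y \<in> V0 \<inter> U 0" for y
  proof -
    obtain w where w: "w \<in> F y" "w \<in> V1"
      using V0(3) y by blast
    then obtain z where z: "z \<in> Orb X F" "z 0 = w" "\<forall>i\<le>N. z i \<in> U (Suc i)"
      using V1(3) by blast
    have "y \<in> X" using y U0(1) openin_imp_subset by blast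
    then have "case_nat y z \<in> Orb X F"
      using z(1,2) w(1) by (intro Orb_case_nat) auto
    moreover have "case_nat y z i \<in> U i" if "i \<le> Suc N" for i
      using that y z(3) by (cases i) auto
    ultimately show ?thesis
      by (intro bexI[of _ "case_nat y z"]) auto
  qed
  moreover have "openin (top_of_set X) (V0 \<inter> U 0)" "x 0 \<in> V0 \<inter> U 0"
    using V0 U0 by auto
  ultimately show ?case by blast
qed

lemma open_map_Orb_proj0:
  assumes F_values: "\<And>x. x \<in> X \<Longrightarrow> F x \<noteq> {} \<and> F x \<subseteq> X" and lsc: "lsc_on X F"
  shows "open_map (subtopology (product_topology (\<lambda>_::nat. top_of_set X) UNIV) (Orb X F))
                  (top_of_set X) (\<lambda>x. x 0)"
  unfolding open_map_def
proof (intro allI impI)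
  fix W assume "openin (subtopology (product_topology (\<lambda>_::nat. top_of_set X) UNIV) (Orb X F)) W"
  then obtain S where S: "openin (product_topology (\<lambda>_::nat. top_of_set X) UNIV) S"
    and W: "W = S \<inter> Orb X F"
    by (auto simp: openin_subtopology)
  show "openin (top_of_set X) ((\<lambda>x. x 0) ` W)"
  proof (subst openin_subopen, intro ballI)
    fix y0 assume "y0 \<in> (\<lambda>x. x 0) ` W"
    then obtain x where x: "x \<in> S" "x \<in> Orb X F" and y0: "y0 = x 0"
      using W by auto
    obtain U where U: "finite {i. U i \<noteq> X}" "\<forall>i. openin (top_of_set X) (U i)"
        "x \<in> PiE UNIV U" "PiE UNIV U \<subseteq> S"
      using S x(1) unfolding openin_product_topology_alt by auto
    obtain N where N: "{i. U i \<noteq> X} \<subseteq> {..<N}"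
      using U(1) finite_nat_bounded by blast
    have "\<forall>i\<le>N. openin (top_of_set X) (U i) \<and> x i \<in> U i"
      using U(2,3) by auto
    from lsc_Orb_prefix_nhood[of X F, OF F_values lsc x(2) this] obtain V where
      V: "openin (top_of_set X) V" "x 0 \<in> V"
        "\<forall>y\<in>V. \<exists>z\<in>Orb X F. z 0 = y \<and> (\<forall>i\<le>N. z i \<in> U i)"
      by blast
    have "V \<subseteq> (\<lambda>x. x 0) ` W"
    proof
      fix y assume "y \<in> V"
      then obtain z where z: "z \<in> Orb X F" "z 0 = y" "\<forall>i\<le>N. z i \<in> U i"
        using V(3) by blast
      have "z i \<in> U i" for i
      proof (cases "i \<le> N")
        case False
        then have "U i = X" using N by force
        then show ?thesis using z(1) by (simp add: Orb_def)
      qed (use z in auto)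
      then have "z \<in> S" using U(4) by auto
      then show "y \<in> (\<lambda>x. x 0) ` W" using W z by auto
    qed
    then show "\<exists>T. openin (top_of_set X) T \<and> y0 \<in> T \<and> T \<subseteq> (\<lambda>x. x 0) ` W"
      using V y0 by blast
  qed
qed

theorem corollary3p3:
  fixes X :: "'a::metric_space set" and F :: "'a \<Rightarrow> 'a set"
  assumes "compact X"
    and "setvalued_map X F"
    and "continuous_setvalued_on X F"
  shows "open_map (subtopology (product_topology (\<lambda>_::nat. top_of_set X) UNIV) (Orb X F))
                  (top_of_set X) (\<lambda>x. x 0)"
proof (rule open_map_Orb_proj0)
  show "\<And>x. x \<in> X \<Longrightarrow> F x \<noteq> {} \<and> F x \<subseteq> X"
    using assms(2) by (simp add: setvalued_map_def)
  show "lsc_on X F"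
    using assms(3) by (simp add: continuous_setvalued_on_def)
qed

end
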